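(* Let $n\in\mathbb{N}$, $q\ge 2$, and let $\Gamma$ be a finite constraint language of $k$-ary relations over $[q]$. For $a,b\in[q]^n$, define $(a,b)\in\mathcal{E}$ if every instance of $\mathsf{CSP}(\Gamma)$ on $n$ variables that is satisfied by $a$ is also satisfied by $b$. Then $\mathcal{E}$ is an equivalence relation on $[q]^n$. Moreover, for every $a\in[q]^n$ there exists an instance $P_a$ of $\mathsf{CSP}(\Gamma)$ on $n$ variables with $\mathrm{Sat}(P_a)=[a]_{\mathcal{E}}$, the equivalence class of $a$ under $\mathcal{E}$.
   Context: An instance of $\mathsf{CSP}(\Gamma)$ on variables $x_1,\dots,x_n$ over $[q]=\{0,\dots,q-1\}$ is a finite set of constraints $\{R,(x_{i_1}+\lambda_{i_1},\dots,x_{i_k}+\lambda_{i_k})\}$ with $R\in\Gamma$, $(i_1,\dots,i_k)\in[n]^k$, $\lambda_{i_j}\in[q]$; an assignment $a\in[q]^n$ satisfies it if $(a_{i_1}+\lambda_{i_1},\dots,a_{i_k}+\lambda_{i_k})\in R$ (addition mod $q$), and satisfies the instance if it satisfies all its constraints. $\mathrm{Sat}(I)$ denotes the set of assignments satisfying $I$. *)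

theory Defs
  imports Main
begin

definition cube :: "nat \<Rightarrow> nat \<Rightarrow> nat list set" where
  "cube q m = {xs. length xs = m \<and> (\<forall>x\<in>set xs. x < q)}"

text \<open>A constraint: a relation R, a scope (i_1,...,i_k) of variable indices,
  and a shift vector lam (lam ! i is the shift applied to variable x_i).\<close>

type_synonym constr = "nat list set \<times> nat list \<times> nat list"

definition is_constraint :: "nat list set set \<Rightarrow> nat \<Rightarrow> nat \<Rightarrow> nat \<Rightarrow> constr \<Rightarrow> bool" where
  "is_constraint \<Gamma> q k n c \<longleftrightarrow>
     (case c of (R, sc, lam) \<Rightarrow>
        R \<in> \<Gamma> \<and> length sc = k \<and> (\<forall>i\<in>set sc. i < n) \<and> lam \<in> cube q n)"

definition is_instance :: "nat list set set \<Rightarrow> nat \<Rightarrow> nat \<Rightarrow> nat \<Rightarrow> constr set \<Rightarrow> bool" where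
  "is_instance \<Gamma> q k n I \<longleftrightarrow> finite I \<and> (\<forall>c\<in>I. is_constraint \<Gamma> q k n c)"

definition sat_constr :: "nat \<Rightarrow> nat list \<Rightarrow> constr \<Rightarrow> bool" where
  "sat_constr q a c \<longleftrightarrow>
     (case c of (R, sc, lam) \<Rightarrow> map (\<lambda>i. (a ! i + lam ! i) mod q) sc \<in> R)"

definition Sat :: "nat \<Rightarrow> nat \<Rightarrow> constr set \<Rightarrow> nat list set" where
  "Sat q n I = {a \<in> cube q n. \<forall>c\<in>I. sat_constr q a c}"

definition E_rel :: "nat list set set \<Rightarrow> nat \<Rightarrow> nat \<Rightarrow> nat \<Rightarrow> (nat list \<times> nat list) set" where
  "E_rel \<Gamma> q k n = {(a, b). a \<in> cube q n \<and> b \<in> cube q n \<and>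
      (\<forall>I. is_instance \<Gamma> q k n I \<longrightarrow> a \<in> Sat q n I \<longrightarrow> b \<in> Sat q n I)}"

end

theory Submission
  imports Defs
begin

text \<open>Symmetry comes from translation
  invariance: replacing every shift \<open>\<lambda>\<close> of an instance by \<open>\<lambda> + c\<close> turns it into an instance
  satisfied by \<open>a\<close> exactly when the original is satisfied by \<open>a + c\<close>, so \<open>(a, b) \<in> \<E>\<close> implies
  \<open>(a + c, b + c) \<in> \<E>\<close>. With \<open>d = b - a\<close> this gives the chain
  \<open>b = a + d, a + 2d, \<dots>, a + q d = a\<close> of \<open>\<E>\<close>-steps, hence \<open>(b, a) \<in> \<E>\<close>.
  For \<open>P\<^sub>a\<close> take all constraints satisfied by \<open>a\<close>; there are finitely many because \<open>\<Gamma>\<close> is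
  finite.\<close>

definition tuple_add :: "nat \<Rightarrow> nat \<Rightarrow> nat list \<Rightarrow> nat list \<Rightarrow> nat list" where
  "tuple_add q n a c = map (\<lambda>i. (a ! i + c ! i) mod q) [0..<n]"

definition shift_constraint :: "nat \<Rightarrow> nat \<Rightarrow> nat list \<Rightarrow> constr \<Rightarrow> constr" where
  "shift_constraint q n c con = (case con of (R, sc, lam) \<Rightarrow> (R, sc, tuple_add q n lam c))"

definition satisfied_constraints ::
    "nat list set set \<Rightarrow> nat \<Rightarrow> nat \<Rightarrow> nat \<Rightarrow> nat list \<Rightarrow> constr set" where
  "satisfied_constraints \<Gamma> q k n a = {con. is_constraint \<Gamma> q k n con \<and> sat_constr q a con}"

lemma tuple_add_in_cube: "q > 0 \<Longrightarrow> tuple_add q n a c \<in> cube q n"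
  by (auto simp: tuple_add_def cube_def)

lemma cube_translate_exists:
  assumes "a \<in> cube q n" "b \<in> cube q n"
  shows "\<exists>d. b = tuple_add q n a d"
proof
  let ?d = "map (\<lambda>i. (b ! i + q - a ! i) mod q) [0..<n]"
  have "(a ! i + (b ! i + q - a ! i) mod q) mod q = b ! i" if "i < n" for i
  proof -
    have "a ! i < q" "b ! i < q" using assms that by (auto simp: cube_def)
    then show ?thesis by (simp add: mod_add_right_eq)
  qed
  then show "b = tuple_add q n a ?d"
    using assms by (auto simp: tuple_add_def cube_def intro: nth_equalityI)
qed

lemma funpow_tuple_add:
  assumes "a \<in> cube q n"
  shows "((\<lambda>u. tuple_add q n u d) ^^ j) a = map (\<lambda>i. (a ! i + j * d ! i) mod q) [0..<n]"
proof (induction j)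
  case 0
  show ?case using assms by (auto simp: cube_def intro: nth_equalityI)
next
  case (Suc j)
  then show ?case by (simp add: tuple_add_def mod_add_right_eq ac_simps)
qed

lemma funpow_tuple_add_period:
  assumes "a \<in> cube q n"
  shows "((\<lambda>u. tuple_add q n u d) ^^ q) a = a"
  using assms by (auto simp: funpow_tuple_add cube_def intro: nth_equalityI)

lemma is_constraint_shift:
  "is_constraint \<Gamma> q k n con \<Longrightarrow> q > 0 \<Longrightarrow> is_constraint \<Gamma> q k n (shift_constraint q n c con)"
  using tuple_add_in_cube by (cases con) (auto simp: is_constraint_def shift_constraint_def)

lemma sat_constr_shift:
  assumes "is_constraint \<Gamma> q k n con"
  shows "sat_constr q a (shift_constraint q n c con) \<longleftrightarrow> sat_constr q (tuple_add q n a c) con"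
proof -
  obtain R sc lam where con: "con = (R, sc, lam)" by (cases con)
  have "\<forall>i\<in>set sc. i < n" using assms con by (simp add: is_constraint_def)
  then have eq: "map (\<lambda>i. (a ! i + tuple_add q n lam c ! i) mod q) sc
      = map (\<lambda>i. (tuple_add q n a c ! i + lam ! i) mod q) sc"
    by (intro map_cong) (auto simp: tuple_add_def mod_add_left_eq mod_add_right_eq ac_simps)
  show ?thesis by (simp only: con shift_constraint_def sat_constr_def prod.case eq)
qed

lemma Sat_shift:
  assumes "is_instance \<Gamma> q k n I" "q > 0" "a \<in> cube q n"
  shows "a \<in> Sat q n (shift_constraint q n c ` I) \<longleftrightarrow> tuple_add q n a c \<in> Sat q n I"
  using assms sat_constr_shift tuple_add_in_cube by (fastforce simp: Sat_def is_instance_def)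

lemma is_instance_shift:
  "is_instance \<Gamma> q k n I \<Longrightarrow> q > 0 \<Longrightarrow> is_instance \<Gamma> q k n (shift_constraint q n c ` I)"
  using is_constraint_shift by (auto simp: is_instance_def)

lemma E_rel_subset: "E_rel \<Gamma> q k n \<subseteq> cube q n \<times> cube q n"
  by (auto simp: E_rel_def)

lemma E_rel_refl: "a \<in> cube q n \<Longrightarrow> (a, a) \<in> E_rel \<Gamma> q k n"
  by (auto simp: E_rel_def)

lemma E_rel_trans: "trans (E_rel \<Gamma> q k n)"
  by (auto simp: E_rel_def intro: transI)

lemma E_rel_translate:
  assumes ab: "(a, b) \<in> E_rel \<Gamma> q k n" and q: "q > 0"
  shows "(tuple_add q n a c, tuple_add q n b c) \<in> E_rel \<Gamma> q k n"
proof -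
  have "tuple_add q n b c \<in> Sat q n I"
    if I: "is_instance \<Gamma> q k n I" and "tuple_add q n a c \<in> Sat q n I" for I
  proof -
    have "a \<in> Sat q n (shift_constraint q n c ` I)"
      using that ab q Sat_shift by (auto simp: E_rel_def)
    then have "b \<in> Sat q n (shift_constraint q n c ` I)"
      using ab is_instance_shift[OF I q] by (auto simp: E_rel_def)
    then show ?thesis using I q ab Sat_shift by (auto simp: E_rel_def)
  qed
  then show ?thesis using tuple_add_in_cube[OF q] by (auto simp: E_rel_def)
qed

lemma E_rel_translate_orbit:
  assumes "(a, t a) \<in> E_rel \<Gamma> q k n" "q > 0" and t: "t = (\<lambda>u. tuple_add q n u d)"
  shows "((t ^^ j) a, (t ^^ Suc j) a) \<in> E_rel \<Gamma> q k n"
proof (induction j)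
  case 0
  then show ?case using assms by simp
next
  case (Suc j)
  then show ?case using E_rel_translate[OF _ assms(2), where c = d] by (simp add: t)
qed

lemma E_rel_sym:
  assumes ab: "(a, b) \<in> E_rel \<Gamma> q k n" and q: "q > 0"
  shows "(b, a) \<in> E_rel \<Gamma> q k n"
proof -
  have a: "a \<in> cube q n" and b: "b \<in> cube q n" using ab by (auto simp: E_rel_def)
  then obtain d where bd: "b = tuple_add q n a d" using cube_translate_exists by blast
  define t where "t = (\<lambda>u. tuple_add q n u d)"
  have step: "((t ^^ j) a, (t ^^ Suc j) a) \<in> E_rel \<Gamma> q k n" for j
    using E_rel_translate_orbit[OF _ q t_def] ab bd t_def by simp
  have "(b, (t ^^ Suc m) a) \<in> E_rel \<Gamma> q k n" for m
  proof (induction m)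
    case 0
    show ?case using E_rel_refl[OF b] bd t_def by simp
  next
    case (Suc m)
    then show ?case using step E_rel_trans by (blast dest: transD)
  qed
  from this[of "q - 1"] show ?thesis
    using q funpow_tuple_add_period[OF a] by (simp add: t_def)
qed

lemma finite_cube: "finite (cube q m)"
proof -
  have "cube q m \<subseteq> {xs. set xs \<subseteq> {..<q} \<and> length xs = m}"
    by (auto simp: cube_def)
  then show ?thesis using finite_lists_length_eq[of "{..<q}" m] finite_subset by blast
qed

lemma finite_constraints: "finite \<Gamma> \<Longrightarrow> finite {con. is_constraint \<Gamma> q k n con}"
proof -
  assume "finite \<Gamma>"
  moreover have "finite {sc :: nat list. length sc = k \<and> (\<forall>i\<in>set sc. i < n)}"
    using finite_cube[of n k] by (simp add: cube_def)
  moreover have "{con. is_constraint \<Gamma> q k n con}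
      \<subseteq> \<Gamma> \<times> {sc. length sc = k \<and> (\<forall>i\<in>set sc. i < n)} \<times> cube q n"
    by (auto simp: is_constraint_def)
  ultimately show ?thesis using finite_cube by (meson finite_SigmaI finite_subset)
qed

lemma is_instance_satisfied_constraints:
  "finite \<Gamma> \<Longrightarrow> is_instance \<Gamma> q k n (satisfied_constraints \<Gamma> q k n a)"
  using finite_constraints
  by (auto simp: is_instance_def satisfied_constraints_def intro: rev_finite_subset)

lemma Sat_satisfied_constraints:
  assumes "finite \<Gamma>" "a \<in> cube q n"
  shows "Sat q n (satisfied_constraints \<Gamma> q k n a) = E_rel \<Gamma> q k n `` {a}"
proof
  have "a \<in> Sat q n (satisfied_constraints \<Gamma> q k n a)"
    using assms(2) by (simp add: Sat_def satisfied_constraints_def)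
  then show "E_rel \<Gamma> q k n `` {a} \<subseteq> Sat q n (satisfied_constraints \<Gamma> q k n a)"
    using is_instance_satisfied_constraints[OF assms(1)] by (auto simp: E_rel_def)
  have "I \<subseteq> satisfied_constraints \<Gamma> q k n a"
    if "is_instance \<Gamma> q k n I" "a \<in> Sat q n I" for I
    using that by (auto simp: satisfied_constraints_def is_instance_def Sat_def)
  then show "Sat q n (satisfied_constraints \<Gamma> q k n a) \<subseteq> E_rel \<Gamma> q k n `` {a}"
    using assms(2) by (auto simp: E_rel_def Sat_def)
qed

theorem theorem4p2:
  fixes n q k :: nat and \<Gamma> :: "nat list set set"
  assumes "q \<ge> 2"
    and "finite \<Gamma>"
    and "\<forall>R\<in>\<Gamma>. R \<subseteq> cube q k"
  shows "equiv (cube q n) (E_rel \<Gamma> q k n) \<and>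
         (\<forall>a\<in>cube q n. \<exists>P. is_instance \<Gamma> q k n P \<and>
              Sat q n P = E_rel \<Gamma> q k n `` {a})"
proof
  have q: "q > 0" using assms(1) by simp
  show "equiv (cube q n) (E_rel \<Gamma> q k n)"
  proof (rule equivI)
    show "refl_on (cube q n) (E_rel \<Gamma> q k n)"
      using E_rel_subset E_rel_refl by (auto intro: refl_onI)
    show "E_rel \<Gamma> q k n \<subseteq> cube q n \<times> cube q n"
      by (rule E_rel_subset)
    show "sym (E_rel \<Gamma> q k n)"
      using E_rel_sym[OF _ q] by (auto intro: symI)
    show "trans (E_rel \<Gamma> q k n)"
      by (rule E_rel_trans)
  qed
  show "\<forall>a\<in>cube q n. \<exists>P. is_instance \<Gamma> q k n P \<and> Sat q n P = E_rel \<Gamma> q k n `` {a}"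
    using is_instance_satisfied_constraints Sat_satisfied_constraints assms(2) by blast
qed

end
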